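(* Let $A$ be an ideal of $D$ such that $A=(I_1I_2\cdots I_m)^{\ast}$ for some finitely many $\ast$-homog ideals $I_1,\dots,I_m$. Then $A=(J_1J_2\cdots J_r)^\ast$ for some $\ast$-homog ideals $J_1,\dots,J_r$ that are mutually $\ast$-comaximal, and this expression is unique up to order: if also $A=(K_1\cdots K_s)^\ast$ with $K_1,\dots,K_s$ mutually $\ast$-comaximal $\ast$-homog ideals, then $r=s$ and after reordering $J_i=K_i$ for all $i$.
   Context: $D$ is an integral domain and $\ast$ is a star operation on $D$ of finite character. A $\ast$-ideal is a nonzero fractional ideal $I$ with $I^\ast=I$; it is of finite type if $I=J^\ast$ for some nonzero finitely generated $J$. A maximal $\ast$-ideal is an integral $\ast$-ideal maximal among proper integral $\ast$-ideals. Ideals $A,B$ are $\ast$-comaximal if $(A+B)^\ast=D$. A $\ast$-homog ideal of $D$ is an integral $\ast$-ideal $I$ of finite type with $I\subsetneq D$ such that $(J+L)^{\ast}\neq D$ for every pair $J,L$ of proper integral $\ast$-ideals of finite type containing $I$. *)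

theory Defs
  imports Main "HOL-Library.Multiset"
begin

text \<open>The integral domain D is modelled as a subring of a field 'k which is its
quotient field; fractional ideals are subsets of 'k.\<close>

definition quotient_domain :: "'k::field set \<Rightarrow> bool" where
  "quotient_domain D \<longleftrightarrow> 0 \<in> D \<and> 1 \<in> D \<and>
     (\<forall>x\<in>D. \<forall>y\<in>D. x + y \<in> D \<and> x - y \<in> D \<and> x * y \<in> D) \<and>
     (\<forall>x. \<exists>a\<in>D. \<exists>b\<in>D. b \<noteq> 0 \<and> x = a / b)"

definition dmodule :: "'k::field set \<Rightarrow> 'k set \<Rightarrow> bool" where
  "dmodule D I \<longleftrightarrow> 0 \<in> I \<and> (\<forall>x\<in>I. \<forall>y\<in>I. x + y \<in> I) \<and> (\<forall>d\<in>D. \<forall>x\<in>I. d * x \<in> I)"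

definition frac_ideal :: "'k::field set \<Rightarrow> 'k set \<Rightarrow> bool" where
  "frac_ideal D I \<longleftrightarrow> dmodule D I \<and> I \<noteq> {0} \<and> (\<exists>d\<in>D. d \<noteq> 0 \<and> (\<lambda>x. d * x) ` I \<subseteq> D)"

definition principal :: "'k::field set \<Rightarrow> 'k \<Rightarrow> 'k set" where
  "principal D x = {d * x | d. d \<in> D}"

definition scale :: "'k::field \<Rightarrow> 'k set \<Rightarrow> 'k set" where
  "scale x I = (\<lambda>y. x * y) ` I"

definition gen :: "'k::field set \<Rightarrow> 'k set \<Rightarrow> 'k set" where
  "gen D F = {(\<Sum>x\<in>F. c x * x) | c. \<forall>x\<in>F. c x \<in> D}"

definition fin_gen :: "'k::field set \<Rightarrow> 'k set \<Rightarrow> bool" where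
  "fin_gen D J \<longleftrightarrow> (\<exists>F. finite F \<and> J = gen D F)"

definition star_operation :: "'k::field set \<Rightarrow> ('k set \<Rightarrow> 'k set) \<Rightarrow> bool" where
  "star_operation D st \<longleftrightarrow>
     (\<forall>I. frac_ideal D I \<longrightarrow> frac_ideal D (st I)) \<and>
     (\<forall>x. x \<noteq> 0 \<longrightarrow> st (principal D x) = principal D x) \<and>
     (\<forall>x I. x \<noteq> 0 \<and> frac_ideal D I \<longrightarrow> st (scale x I) = scale x (st I)) \<and>
     (\<forall>I. frac_ideal D I \<longrightarrow> I \<subseteq> st I) \<and>
     (\<forall>I J. frac_ideal D I \<and> frac_ideal D J \<and> I \<subseteq> J \<longrightarrow> st I \<subseteq> st J) \<and>
     (\<forall>I. frac_ideal D I \<longrightarrow> st (st I) = st I)"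

definition finite_character :: "'k::field set \<Rightarrow> ('k set \<Rightarrow> 'k set) \<Rightarrow> bool" where
  "finite_character D st \<longleftrightarrow>
     (\<forall>I. frac_ideal D I \<longrightarrow>
        st I = \<Union>{st J | J. J \<subseteq> I \<and> fin_gen D J \<and> J \<noteq> {0}})"

definition ideal_sum :: "'k::{plus} set \<Rightarrow> 'k set \<Rightarrow> 'k set" where
  "ideal_sum I J = {a + b | a b. a \<in> I \<and> b \<in> J}"

definition ideal_prod :: "'k::comm_ring_1 set \<Rightarrow> 'k set \<Rightarrow> 'k set" where
  "ideal_prod I J = {(\<Sum>i<n. a i * b i) | (n::nat) a b. \<forall>i<n. a i \<in> I \<and> b i \<in> J}"

definition ideal_prod_list :: "'k::field set \<Rightarrow> 'k set list \<Rightarrow> 'k set" where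
  "ideal_prod_list D Is = foldr ideal_prod Is D"

definition star_ideal :: "'k::field set \<Rightarrow> ('k set \<Rightarrow> 'k set) \<Rightarrow> 'k set \<Rightarrow> bool" where
  "star_ideal D st I \<longleftrightarrow> frac_ideal D I \<and> st I = I"

definition integral_star_ideal :: "'k::field set \<Rightarrow> ('k set \<Rightarrow> 'k set) \<Rightarrow> 'k set \<Rightarrow> bool" where
  "integral_star_ideal D st I \<longleftrightarrow> star_ideal D st I \<and> I \<subseteq> D"

definition finite_type :: "'k::field set \<Rightarrow> ('k set \<Rightarrow> 'k set) \<Rightarrow> 'k set \<Rightarrow> bool" where
  "finite_type D st I \<longleftrightarrow> (\<exists>J. fin_gen D J \<and> J \<noteq> {0} \<and> I = st J)"

definition star_comaximal :: "'k::field set \<Rightarrow> ('k set \<Rightarrow> 'k set) \<Rightarrow> 'k set \<Rightarrow> 'k set \<Rightarrow> bool" where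
  "star_comaximal D st A B \<longleftrightarrow> st (ideal_sum A B) = D"

definition star_homog :: "'k::field set \<Rightarrow> ('k set \<Rightarrow> 'k set) \<Rightarrow> 'k set \<Rightarrow> bool" where
  "star_homog D st I \<longleftrightarrow> integral_star_ideal D st I \<and> finite_type D st I \<and> I \<noteq> D \<and>
     (\<forall>J L. integral_star_ideal D st J \<and> finite_type D st J \<and> J \<noteq> D \<and> I \<subseteq> J \<and>
            integral_star_ideal D st L \<and> finite_type D st L \<and> L \<noteq> D \<and> I \<subseteq> L
        \<longrightarrow> st (ideal_sum J L) \<noteq> D)"

definition mutually_star_comaximal :: "'k::field set \<Rightarrow> ('k set \<Rightarrow> 'k set) \<Rightarrow> 'k set list \<Rightarrow> bool" where
  "mutually_star_comaximal D st Js \<longleftrightarrow>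
     (\<forall>i<length Js. \<forall>j<length Js. i \<noteq> j \<longrightarrow> star_comaximal D st (Js ! i) (Js ! j))"

end

theory Submission
  imports Defs
begin

text \<open>
  Every maximal star ideal M is prime: if a, b \<notin> M then M + D a and M + D b have star closure D,
  hence so has their product, which lies in M when a b \<in> M. By finite character, a homog ideal
  lies in exactly one maximal star ideal. Consequently two homog ideals are either star-comaximal
  or lie in the same maximal star ideal M, and then the star closure of their product is again a
  homog ideal in M. Existence follows by inserting the factors one at a time, merging a new
  factor with the factor below the same maximal star ideal. For uniqueness, in a comaximal
  factorization of A the factor contained in M is recovered from A alone as the saturation
  {x \<in> D. s x \<in> A for some s \<in> D - M}, and the maximal star ideals containing A are exactly
  those containing some factor.
\<close>

subsection \<open>Sums and products of additive subgroups\<close>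

lemma sum_mem_closed:
  assumes "0 \<in> S" "\<And>u v. u \<in> S \<Longrightarrow> v \<in> S \<Longrightarrow> u + v \<in> S" "\<And>x. x \<in> A \<Longrightarrow> f x \<in> S"
  shows "sum f A \<in> S"
proof (cases "finite A")
  case True
  then show ?thesis using assms(3) by (induction A rule: finite_induct) (auto intro: assms)
qed (simp add: assms)

lemma mem_ideal_prod_iff:
  "x \<in> ideal_prod I J \<longleftrightarrow> (\<exists>(n::nat) a b. x = (\<Sum>i<n. a i * b i) \<and> (\<forall>i<n. a i \<in> I \<and> b i \<in> J))"
  unfolding ideal_prod_def by blast

lemma zero_mem_ideal_prod: "0 \<in> ideal_prod I J"
  unfolding mem_ideal_prod_iff by (intro exI[of _ "0::nat"]) simp

lemma mult_mem_ideal_prod: "a \<in> I \<Longrightarrow> b \<in> J \<Longrightarrow> a * b \<in> ideal_prod I J"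
  unfolding mem_ideal_prod_iff by (intro exI[of _ "1::nat"] exI[of _ "\<lambda>_. a"] exI[of _ "\<lambda>_. b"]) simp

lemma add_mem_ideal_prod:
  assumes "x \<in> ideal_prod I J" "y \<in> ideal_prod I J"
  shows "x + y \<in> ideal_prod I J"
proof -
  obtain n a b m c d where x: "x = (\<Sum>i<(n::nat). a i * b i)" "\<forall>i<n. a i \<in> I \<and> b i \<in> J"
    and y: "y = (\<Sum>i<(m::nat). c i * d i)" "\<forall>i<m. c i \<in> I \<and> d i \<in> J"
    using assms unfolding mem_ideal_prod_iff by blast
  define a' where "a' i = (if i < n then a i else c (i - n))" for i
  define b' where "b' i = (if i < n then b i else d (i - n))" for i
  have "(\<Sum>i<n+m. a' i * b' i) = (\<Sum>i<n. a' i * b' i) + (\<Sum>i<m. a' (n+i) * b' (n+i))"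
    by (induction m) (auto simp: add.assoc)
  also have "\<dots> = x + y"
    unfolding x y a'_def b'_def by (auto intro!: arg_cong2[where f = "(+)"] sum.cong)
  finally have "x + y = (\<Sum>i<n+m. a' i * b' i)" by simp
  moreover have "\<forall>i<n+m. a' i \<in> I \<and> b' i \<in> J" using x y by (auto simp: a'_def b'_def)
  ultimately show ?thesis unfolding mem_ideal_prod_iff by blast
qed

lemma ideal_prod_induct [consumes 1, case_names zero mult add]:
  assumes "x \<in> ideal_prod I J" "P 0" "\<And>a b. a \<in> I \<Longrightarrow> b \<in> J \<Longrightarrow> P (a * b)"
    "\<And>u v. P u \<Longrightarrow> P v \<Longrightarrow> P (u + v)"
  shows "P x"
proof -
  obtain n a b where x: "x = (\<Sum>i<(n::nat). a i * b i)" "\<forall>i<n. a i \<in> I \<and> b i \<in> J"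
    using assms(1) unfolding mem_ideal_prod_iff by blast
  have "k \<le> n \<Longrightarrow> P (\<Sum>i<k. a i * b i)" for k
    by (induction k) (auto simp: assms x)
  then show ?thesis using x by auto
qed

lemma ideal_prod_subsetI:
  assumes "0 \<in> S" "\<And>a b. a \<in> I \<Longrightarrow> b \<in> J \<Longrightarrow> a * b \<in> S"
    "\<And>u v. u \<in> S \<Longrightarrow> v \<in> S \<Longrightarrow> u + v \<in> S"
  shows "ideal_prod I J \<subseteq> S"
  using ideal_prod_induct[of _ I J "\<lambda>x. x \<in> S"] assms by blast

lemma ideal_prod_mono: "I \<subseteq> I' \<Longrightarrow> J \<subseteq> J' \<Longrightarrow> ideal_prod I J \<subseteq> ideal_prod I' J'"
  by (rule ideal_prod_subsetI) (auto intro: zero_mem_ideal_prod mult_mem_ideal_prod add_mem_ideal_prod)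

lemma ideal_prod_commute: "ideal_prod I J = ideal_prod J I"
proof -
  have "ideal_prod I J \<subseteq> ideal_prod J I" for I J :: "'a set"
    by (rule ideal_prod_subsetI[OF zero_mem_ideal_prod _ add_mem_ideal_prod])
      (metis mult.commute mult_mem_ideal_prod)
  then show ?thesis by blast
qed

lemma ideal_prod_assoc_subset:
  "ideal_prod (ideal_prod I J) K \<subseteq> ideal_prod I (ideal_prod J K)"
proof (rule ideal_prod_subsetI[OF zero_mem_ideal_prod _ add_mem_ideal_prod])
  fix x c assume "x \<in> ideal_prod I J" and c: "c \<in> K"
  then show "x * c \<in> ideal_prod I (ideal_prod J K)"
  proof (induction rule: ideal_prod_induct)
    case (mult a b)
    then show ?case using c by (simp add: mult_mem_ideal_prod mult.assoc)
  qed (simp_all add: zero_mem_ideal_prod distrib_right add_mem_ideal_prod)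
qed

lemma ideal_prod_assoc: "ideal_prod (ideal_prod I J) K = ideal_prod I (ideal_prod J K)"
proof
  have "ideal_prod I (ideal_prod J K) = ideal_prod (ideal_prod K J) I"
    by (simp add: ideal_prod_commute)
  also have "\<dots> \<subseteq> ideal_prod K (ideal_prod J I)" by (rule ideal_prod_assoc_subset)
  also have "\<dots> = ideal_prod (ideal_prod I J) K" by (simp add: ideal_prod_commute)
  finally show "ideal_prod I (ideal_prod J K) \<subseteq> ideal_prod (ideal_prod I J) K" .
qed (rule ideal_prod_assoc_subset)

lemma ideal_prod_left_commute: "ideal_prod I (ideal_prod J K) = ideal_prod J (ideal_prod I K)"
  by (metis ideal_prod_assoc ideal_prod_commute)

lemma ideal_prod_list_Nil: "ideal_prod_list D [] = D"
  and ideal_prod_list_Cons: "ideal_prod_list D (I # Is) = ideal_prod I (ideal_prod_list D Is)"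
  unfolding ideal_prod_list_def by simp_all

lemma ideal_prod_list_mset_eq:
  assumes "mset Is = mset Js" shows "ideal_prod_list D Is = ideal_prod_list D Js"
proof -
  have "List.fold ideal_prod (rev Is) = List.fold ideal_prod (rev Js)"
    by (rule fold_multiset_equiv) (auto simp: fun_eq_iff ideal_prod_left_commute assms)
  then show ?thesis by (simp add: ideal_prod_list_def foldr_conv_fold)
qed

lemma ideal_prod_list_remove1:
  "I \<in> set Is \<Longrightarrow> ideal_prod_list D Is = ideal_prod I (ideal_prod_list D (remove1 I Is))"
  using ideal_prod_list_mset_eq[of Is "I # remove1 I Is" D] by (simp add: ideal_prod_list_Cons)

lemma ideal_sum_commute: "ideal_sum I J = ideal_sum J (I :: 'a::ab_semigroup_add set)"
  unfolding ideal_sum_def using add.commute by blast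

lemma ideal_sum_mono: "I \<subseteq> I' \<Longrightarrow> J \<subseteq> J' \<Longrightarrow> ideal_sum I J \<subseteq> ideal_sum I' J'"
  unfolding ideal_sum_def by blast


lemma dmodule_zero: "dmodule D I \<Longrightarrow> 0 \<in> I"
  and dmodule_add: "dmodule D I \<Longrightarrow> x \<in> I \<Longrightarrow> y \<in> I \<Longrightarrow> x + y \<in> I"
  and dmodule_mult: "dmodule D I \<Longrightarrow> d \<in> D \<Longrightarrow> x \<in> I \<Longrightarrow> d * x \<in> I"
  unfolding dmodule_def by auto

lemma dmodule_sum: "dmodule D I \<Longrightarrow> (\<And>x. x \<in> A \<Longrightarrow> f x \<in> I) \<Longrightarrow> sum f A \<in> I"
  by (rule sum_mem_closed) (auto intro: dmodule_zero dmodule_add)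

lemma frac_ideal_dmodule: "frac_ideal D I \<Longrightarrow> dmodule D I"
  and frac_ideal_nonzero: "frac_ideal D I \<Longrightarrow> I \<noteq> {0}"
  and frac_ideal_denominator: "frac_ideal D I \<Longrightarrow> \<exists>d\<in>D. d \<noteq> 0 \<and> (\<forall>x\<in>I. d * x \<in> D)"
  unfolding frac_ideal_def image_subset_iff by blast+

lemma frac_ideal_ex_nonzero: "frac_ideal D I \<Longrightarrow> \<exists>x\<in>I. x \<noteq> 0"
  using frac_ideal_nonzero frac_ideal_dmodule dmodule_zero by blast

lemma mem_gen_iff: "y \<in> gen D F \<longleftrightarrow> (\<exists>c. y = (\<Sum>x\<in>F. c x * x) \<and> (\<forall>x\<in>F. c x \<in> D))"
  unfolding gen_def by blast

lemma gen_subset: "dmodule D S \<Longrightarrow> F \<subseteq> S \<Longrightarrow> gen D F \<subseteq> S"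
proof
  fix y assume "dmodule D S" "F \<subseteq> S" "y \<in> gen D F"
  then show "y \<in> S" unfolding mem_gen_iff by (auto intro!: dmodule_sum dmodule_mult)
qed

lemma dmodule_ideal_prod:
  assumes "dmodule D I" shows "dmodule D (ideal_prod I J)"
proof -
  have "d * x \<in> ideal_prod I J" if "d \<in> D" "x \<in> ideal_prod I J" for d x
    using that(2)
  proof (induction rule: ideal_prod_induct)
    case (mult a b)
    then have "(d * a) * b \<in> ideal_prod I J"
      using dmodule_mult[OF assms that(1)] mult_mem_ideal_prod by blast
    then show ?case by (simp add: mult.assoc)
  qed (auto simp: zero_mem_ideal_prod distrib_left intro: add_mem_ideal_prod)
  then show ?thesis unfolding dmodule_def using zero_mem_ideal_prod add_mem_ideal_prod by blast
qed

lemma ideal_prod_subset_left: "dmodule D I \<Longrightarrow> J \<subseteq> D \<Longrightarrow> ideal_prod I J \<subseteq> I"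
  by (rule ideal_prod_subsetI) (auto intro: dmodule_zero dmodule_add, metis dmodule_mult mult.commute subsetD)

lemma dmodule_ideal_sum:
  assumes I: "dmodule D I" and J: "dmodule D J" shows "dmodule D (ideal_sum I J)"
  unfolding dmodule_def
proof (intro conjI ballI)
  show "0 \<in> ideal_sum I J"
    unfolding ideal_sum_def using dmodule_zero[OF I] dmodule_zero[OF J] by force
next
  fix x y assume "x \<in> ideal_sum I J" "y \<in> ideal_sum I J"
  then obtain a b a' b' where "x = a + b" "y = a' + b'" "a \<in> I" "b \<in> J" "a' \<in> I" "b' \<in> J"
    unfolding ideal_sum_def by blast
  moreover have "(a + b) + (a' + b') = (a + a') + (b + b')" by (simp add: ac_simps)
  ultimately show "x + y \<in> ideal_sum I J"
    unfolding ideal_sum_def using dmodule_add I J by blast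
next
  fix d x assume "d \<in> D" "x \<in> ideal_sum I J"
  then obtain a b where "x = a + b" "a \<in> I" "b \<in> J" "d * x = d * a + d * b"
    unfolding ideal_sum_def by (auto simp: distrib_left)
  then show "d * x \<in> ideal_sum I J"
    unfolding ideal_sum_def using dmodule_mult I J \<open>d \<in> D\<close> by blast
qed

lemma subset_ideal_sum_left: "dmodule D J \<Longrightarrow> I \<subseteq> ideal_sum I J"
  and subset_ideal_sum_right: "dmodule D I \<Longrightarrow> J \<subseteq> ideal_sum I J"
  unfolding ideal_sum_def using dmodule_zero by force+

lemma ideal_sum_subset: "dmodule D S \<Longrightarrow> I \<subseteq> S \<Longrightarrow> J \<subseteq> S \<Longrightarrow> ideal_sum I J \<subseteq> S"
  unfolding ideal_sum_def using dmodule_add by blast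

lemma ideal_sum_self: "dmodule D I \<Longrightarrow> ideal_sum I I = I"
  using ideal_sum_subset[of D I I I] subset_ideal_sum_left[of D I I] by blast

lemma integral_star_ideal_iff:
  "integral_star_ideal D st I \<longleftrightarrow> frac_ideal D I \<and> st I = I \<and> I \<subseteq> D"
  unfolding integral_star_ideal_def star_ideal_def by blast

lemma integral_star_ideal_frac: "integral_star_ideal D st I \<Longrightarrow> frac_ideal D I"
  and integral_star_ideal_fixed: "integral_star_ideal D st I \<Longrightarrow> st I = I"
  and integral_star_ideal_subset: "integral_star_ideal D st I \<Longrightarrow> I \<subseteq> D"
  and integral_star_ideal_dmodule: "integral_star_ideal D st I \<Longrightarrow> dmodule D I"
  unfolding integral_star_ideal_iff by (simp_all add: frac_ideal_dmodule)

locale star_domain =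
  fixes D :: "'k::field set" and st :: "'k set \<Rightarrow> 'k set"
  assumes quotient_domain: "quotient_domain D"
    and star_operation: "star_operation D st"
    and finite_character: "finite_character D st"
begin

lemma D_zero: "0 \<in> D" and D_one: "1 \<in> D"
  and D_add: "x \<in> D \<Longrightarrow> y \<in> D \<Longrightarrow> x + y \<in> D"
  and D_mult: "x \<in> D \<Longrightarrow> y \<in> D \<Longrightarrow> x * y \<in> D"
  and D_fraction: "\<exists>a\<in>D. \<exists>b\<in>D. b \<noteq> 0 \<and> z = a / b"
  using quotient_domain unfolding quotient_domain_def by meson+

lemma star_frac_ideal: "frac_ideal D I \<Longrightarrow> frac_ideal D (st I)"
  and star_principal: "x \<noteq> 0 \<Longrightarrow> st (principal D x) = principal D x"
  and star_scale: "x \<noteq> 0 \<Longrightarrow> frac_ideal D I \<Longrightarrow> st (scale x I) = scale x (st I)"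
  and star_extensive: "frac_ideal D I \<Longrightarrow> I \<subseteq> st I"
  and star_mono: "frac_ideal D I \<Longrightarrow> frac_ideal D J \<Longrightarrow> I \<subseteq> J \<Longrightarrow> st I \<subseteq> st J"
  and star_idem: "frac_ideal D I \<Longrightarrow> st (st I) = st I"
  using star_operation unfolding star_operation_def by meson+

lemma star_finite_character:
  "frac_ideal D I \<Longrightarrow> st I = \<Union>{st J | J. J \<subseteq> I \<and> fin_gen D J \<and> J \<noteq> {0}}"
  using finite_character by (simp add: finite_character_def)

lemma dmodule_D: "dmodule D D"
  unfolding dmodule_def using D_zero D_add D_mult by auto

lemma frac_ideal_integralI: "dmodule D I \<Longrightarrow> I \<subseteq> D \<Longrightarrow> I \<noteq> {0} \<Longrightarrow> frac_ideal D I"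
  unfolding frac_ideal_def using D_one by (intro conjI bexI[of _ 1]) (simp_all add: image_subset_iff subset_iff)

lemma frac_ideal_D: "frac_ideal D D"
proof (rule frac_ideal_integralI[OF dmodule_D order_refl])
  show "D \<noteq> {0}" using D_one by (metis singletonD zero_neq_one)
qed

lemma star_D: "st D = D"
proof -
  have "principal D 1 = D" unfolding principal_def by auto
  then show ?thesis using star_principal[of 1] by simp
qed

lemma integral_star_ideal_star:
  assumes "frac_ideal D I" "I \<subseteq> D" shows "integral_star_ideal D st (st I)"
proof -
  have "st I \<subseteq> D" using star_mono[OF assms(1) frac_ideal_D assms(2)] by (simp only: star_D)
  then show ?thesis using star_frac_ideal star_idem assms(1) unfolding integral_star_ideal_iff by blast
qed

lemma integral_star_ideal_eq_D: "integral_star_ideal D st I \<Longrightarrow> 1 \<in> I \<Longrightarrow> I = D"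
proof
  assume I: "integral_star_ideal D st I" "1 \<in> I"
  show "D \<subseteq> I"
  proof
    fix d assume "d \<in> D"
    then have "d * 1 \<in> I" by (rule dmodule_mult[OF integral_star_ideal_dmodule[OF I(1)] _ I(2)])
    then show "d \<in> I" by simp
  qed
qed (rule integral_star_ideal_subset)

lemma frac_ideal_ideal_sum:
  assumes "frac_ideal D I" "I \<subseteq> D" "dmodule D J" "J \<subseteq> D"
  shows "frac_ideal D (ideal_sum I J)"
proof (rule frac_ideal_integralI)
  show "dmodule D (ideal_sum I J)" using assms by (simp add: dmodule_ideal_sum frac_ideal_dmodule)
  show "ideal_sum I J \<subseteq> D" using assms(2,4) by (rule ideal_sum_subset[OF dmodule_D])
  show "ideal_sum I J \<noteq> {0}"
    using frac_ideal_ex_nonzero[OF assms(1)] subset_ideal_sum_left[OF assms(3)] by blast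
qed

lemma gen_dmodule: "dmodule D (gen D F)"
  unfolding dmodule_def
proof (intro conjI ballI)
  show "0 \<in> gen D F" unfolding mem_gen_iff by (rule exI[of _ "\<lambda>_. 0"]) (simp add: D_zero)
next
  fix u v assume "u \<in> gen D F" "v \<in> gen D F"
  then obtain c c' where "u = (\<Sum>x\<in>F. c x * x)" "\<forall>x\<in>F. c x \<in> D"
    and "v = (\<Sum>x\<in>F. c' x * x)" "\<forall>x\<in>F. c' x \<in> D" unfolding mem_gen_iff by blast
  then show "u + v \<in> gen D F" unfolding mem_gen_iff
    by (intro exI[of _ "\<lambda>x. c x + c' x"]) (simp add: sum.distrib distrib_right D_add)
next
  fix d u assume "d \<in> D" "u \<in> gen D F"
  then obtain c where "u = (\<Sum>x\<in>F. c x * x)" "\<forall>x\<in>F. c x \<in> D" unfolding mem_gen_iff by blast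
  then show "d * u \<in> gen D F" unfolding mem_gen_iff using \<open>d \<in> D\<close>
    by (intro exI[of _ "\<lambda>x. d * c x"]) (simp add: sum_distrib_left mult.assoc D_mult)
qed

lemma gen_superset: assumes "finite F" shows "F \<subseteq> gen D F"
proof
  fix x assume x: "x \<in> F"
  have "(\<Sum>y\<in>F. (if y = x then 1 else 0) * y) = (\<Sum>y\<in>F. if y = x then y else 0)"
    by (rule sum.cong) auto
  also have "\<dots> = x" using sum.delta[OF assms, of x "\<lambda>y. y"] x by simp
  finally show "x \<in> gen D F" unfolding mem_gen_iff using D_zero D_one
    by (intro exI[of _ "\<lambda>y. if y = x then 1 else 0"]) simp
qed

lemma gen_mono: "finite B \<Longrightarrow> A \<subseteq> B \<Longrightarrow> gen D A \<subseteq> gen D B"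
  by (rule gen_subset[OF gen_dmodule]) (use gen_superset in blast)

lemma common_denominator: "finite F \<Longrightarrow> \<exists>d\<in>D. d \<noteq> 0 \<and> (\<forall>x\<in>F. d * x \<in> D)"
proof (induction F rule: finite_induct)
  case empty then show ?case using D_one by (intro bexI[of _ 1]) simp_all
next
  case (insert y F)
  then obtain d where d: "d \<in> D" "d \<noteq> 0" "\<forall>x\<in>F. d * x \<in> D" by blast
  obtain p q where pq: "p \<in> D" "q \<in> D" "q \<noteq> 0" "y = p / q" using D_fraction by blast
  have "(d * q) * y \<in> D"
  proof -
    have "(d * q) * y = d * p" using pq(3,4) by simp
    also have "\<dots> \<in> D" by (rule D_mult[OF d(1) pq(1)])
    finally show ?thesis .
  qed
  moreover have "(d * q) * x \<in> D" if "x \<in> F" for x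
  proof -
    have "(d * q) * x = q * (d * x)" by (simp only: ac_simps)
    also have "\<dots> \<in> D" using d(3) that by (intro D_mult[OF pq(2)]) simp
    finally show ?thesis .
  qed
  moreover have "d * q \<in> D" "d * q \<noteq> 0" using D_mult[OF d(1) pq(2)] d(2) pq(3) by simp_all
  ultimately show ?case by blast
qed

lemma frac_ideal_gen: assumes "finite F" "gen D F \<noteq> {0}" shows "frac_ideal D (gen D F)"
proof -
  obtain d where d: "d \<in> D" "d \<noteq> 0" "\<forall>x\<in>F. d * x \<in> D" using common_denominator[OF assms(1)] by blast
  have "d * y \<in> D" if y: "y \<in> gen D F" for y
  proof -
    obtain c where c: "y = (\<Sum>x\<in>F. c x * x)" "\<forall>x\<in>F. c x \<in> D" using y unfolding mem_gen_iff by blast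
    have "d * y = (\<Sum>x\<in>F. c x * (d * x))" unfolding c(1) by (simp add: sum_distrib_left ac_simps)
    also have "\<dots> \<in> D" by (intro dmodule_sum[OF dmodule_D]) (simp add: D_mult c(2) d(3))
    finally show ?thesis .
  qed
  then show ?thesis unfolding frac_ideal_def using gen_dmodule assms(2) d(1,2) by blast
qed

lemma frac_ideal_ideal_prod:
  assumes "frac_ideal D I" "frac_ideal D J" shows "frac_ideal D (ideal_prod I J)"
proof -
  obtain a b where ab: "a \<in> I" "a \<noteq> 0" "b \<in> J" "b \<noteq> 0"
    using frac_ideal_ex_nonzero assms by blast
  obtain d e where de: "d \<in> D" "d \<noteq> 0" "\<forall>x\<in>I. d * x \<in> D" "e \<in> D" "e \<noteq> 0" "\<forall>x\<in>J. e * x \<in> D"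
    using frac_ideal_denominator assms by meson
  have "d * e * x \<in> D" if "x \<in> ideal_prod I J" for x
    using that
  proof (induction rule: ideal_prod_induct)
    case (mult u v)
    have "d * e * (u * v) = (d * u) * (e * v)" by (simp only: ac_simps)
    also have "\<dots> \<in> D" by (rule D_mult) (use mult de in simp_all)
    finally show ?case .
  qed (simp_all add: D_zero D_add distrib_left)
  moreover have "ideal_prod I J \<noteq> {0}"
    using ab mult_mem_ideal_prod[of a I b J] by (metis no_zero_divisors singletonD)
  moreover have "d * e \<in> D" "d * e \<noteq> 0" using de D_mult by simp_all
  ultimately show ?thesis unfolding frac_ideal_def image_subset_iff
    using dmodule_ideal_prod[OF frac_ideal_dmodule[OF assms(1)]] by blast
qed

lemma ideal_prod_D_right:
  assumes "dmodule D I" shows "ideal_prod I D = I"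
proof
  show "ideal_prod I D \<subseteq> I" using ideal_prod_subset_left[OF assms order_refl] .
  show "I \<subseteq> ideal_prod I D" using mult_mem_ideal_prod[of _ I 1 D] D_one by fastforce
qed

lemma frac_ideal_scale:
  assumes I: "frac_ideal D I" and x: "x \<noteq> 0" shows "frac_ideal D (scale x I)"
proof -
  obtain p q where pq: "p \<in> D" "q \<in> D" "q \<noteq> 0" "x = p / q" using D_fraction by blast
  obtain d where d: "d \<in> D" "d \<noteq> 0" "\<forall>y\<in>I. d * y \<in> D" using frac_ideal_denominator[OF I] by blast
  have dmI: "dmodule D I" using frac_ideal_dmodule[OF I] .
  have "dmodule D (scale x I)" unfolding dmodule_def
  proof (intro conjI ballI)
    show "0 \<in> scale x I" unfolding scale_def using dmodule_zero[OF dmI] by force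
  next
    fix u v assume "u \<in> scale x I" "v \<in> scale x I"
    then obtain u' v' where "u' \<in> I" "v' \<in> I" "u = x * u'" "v = x * v'" unfolding scale_def by auto
    moreover have "x * u' + x * v' = x * (u' + v')" by (simp add: distrib_left)
    ultimately show "u + v \<in> scale x I" unfolding scale_def using dmodule_add[OF dmI] by auto
  next
    fix c u assume "c \<in> D" "u \<in> scale x I"
    then obtain u' where "u' \<in> I" "u = x * u'" unfolding scale_def by auto
    moreover have "c * (x * u') = x * (c * u')" by (simp add: mult.left_commute)
    ultimately show "c * u \<in> scale x I" unfolding scale_def using dmodule_mult[OF dmI \<open>c \<in> D\<close>] by auto
  qed
  moreover have "scale x I \<noteq> {0}"
  proof -
    obtain y where "y \<in> I" "y \<noteq> 0" using frac_ideal_ex_nonzero[OF I] by blast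
    then have "x * y \<in> scale x I" "x * y \<noteq> 0" using x unfolding scale_def by auto
    then show ?thesis by blast
  qed
  moreover have "q * d * z \<in> D" if z: "z \<in> scale x I" for z
  proof -
    obtain y where y: "y \<in> I" "z = x * y" using z unfolding scale_def by auto
    have "q * d * z = p * (d * y)" using y pq by (simp add: field_simps)
    also have "\<dots> \<in> D" by (rule D_mult) (use pq(1) d(3) y(1) in simp_all)
    finally show ?thesis .
  qed
  moreover have "q * d \<in> D" "q * d \<noteq> 0" using D_mult[OF pq(2) d(1)] pq(3) d(2) by simp_all
  ultimately show ?thesis unfolding frac_ideal_def image_subset_iff by blast
qed

lemma star_ideal_prod_star_left:
  assumes X: "frac_ideal D X" and Y: "frac_ideal D Y"
  shows "st (ideal_prod (st X) Y) = st (ideal_prod X Y)"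
proof
  have XY: "frac_ideal D (ideal_prod X Y)" using frac_ideal_ideal_prod[OF X Y] .
  show "st (ideal_prod X Y) \<subseteq> st (ideal_prod (st X) Y)"
    using star_mono[OF XY frac_ideal_ideal_prod[OF star_frac_ideal[OF X] Y]]
      ideal_prod_mono[OF star_extensive[OF X] order_refl] by blast
  have dm: "dmodule D (st (ideal_prod X Y))" using frac_ideal_dmodule star_frac_ideal XY by blast
  have "ideal_prod (st X) Y \<subseteq> st (ideal_prod X Y)"
  proof (rule ideal_prod_subsetI[OF dmodule_zero[OF dm] _ dmodule_add[OF dm]])
    fix a b assume a: "a \<in> st X" and b: "b \<in> Y"
    show "a * b \<in> st (ideal_prod X Y)"
    proof (cases "b = 0")
      case True then show ?thesis using dmodule_zero[OF dm] by simp
    next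
      case False
      have "a * b \<in> scale b (st X)" using a unfolding scale_def by (auto simp: mult.commute)
      also have "scale b (st X) = st (scale b X)" using star_scale[OF False X] by simp
      also have "\<dots> \<subseteq> st (ideal_prod X Y)"
        using b by (intro star_mono[OF frac_ideal_scale[OF X False] XY])
          (auto simp: scale_def mult.commute intro: mult_mem_ideal_prod)
      finally show ?thesis .
    qed
  qed
  then have "st (ideal_prod (st X) Y) \<subseteq> st (st (ideal_prod X Y))"
    by (rule star_mono[OF frac_ideal_ideal_prod[OF star_frac_ideal[OF X] Y] star_frac_ideal[OF XY]])
  then show "st (ideal_prod (st X) Y) \<subseteq> st (ideal_prod X Y)" using star_idem[OF XY] by simp
qed

lemma star_ideal_prod_star_right:
  "frac_ideal D X \<Longrightarrow> frac_ideal D Y \<Longrightarrow> st (ideal_prod X (st Y)) = st (ideal_prod X Y)"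
  using star_ideal_prod_star_left[of Y X] by (simp add: ideal_prod_commute)

lemma dmodule_principal: "a \<in> D \<Longrightarrow> dmodule D (principal D a)"
  unfolding dmodule_def principal_def
proof (intro conjI ballI)
  show "0 \<in> {d * a |d. d \<in> D}" using D_zero by force
next
  fix x y assume "x \<in> {d * a |d. d \<in> D}" "y \<in> {d * a |d. d \<in> D}"
  then obtain d e where "x = d * a" "y = e * a" "d \<in> D" "e \<in> D" by blast
  then have "x + y = (d + e) * a" "d + e \<in> D" using D_add by (simp_all add: distrib_right)
  then show "x + y \<in> {d * a |d. d \<in> D}" by blast
next
  fix c x assume "c \<in> D" "x \<in> {d * a |d. d \<in> D}"
  then obtain d where "x = d * a" "d \<in> D" by blast
  then have "c * x = (c * d) * a" "c * d \<in> D" using D_mult[OF \<open>c \<in> D\<close>] by (simp_all add: mult.assoc)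
  then show "c * x \<in> {d * a |d. d \<in> D}" by blast
qed

lemma principal_subset_D: "a \<in> D \<Longrightarrow> principal D a \<subseteq> D"
  unfolding principal_def using D_mult by blast

lemma mem_principal_self: "a \<in> principal D a"
  unfolding principal_def using D_one by force

subsection \<open>Maximal star ideals\<close>

definition maximal_star_ideal :: "'k set \<Rightarrow> bool" where
  "maximal_star_ideal M \<longleftrightarrow> integral_star_ideal D st M \<and> M \<noteq> D \<and>
     (\<forall>N. integral_star_ideal D st N \<and> N \<noteq> D \<and> M \<subseteq> N \<longrightarrow> N = M)"

lemma maximal_star_ideal_integral: "maximal_star_ideal M \<Longrightarrow> integral_star_ideal D st M"
  and maximal_star_ideal_eqI:
    "maximal_star_ideal M \<Longrightarrow> integral_star_ideal D st N \<Longrightarrow> N \<noteq> D \<Longrightarrow> M \<subseteq> N \<Longrightarrow> N = M"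
  unfolding maximal_star_ideal_def by blast+

lemma maximal_star_ideal_one: "maximal_star_ideal M \<Longrightarrow> 1 \<notin> M"
  unfolding maximal_star_ideal_def using integral_star_ideal_eq_D by blast

lemma maximal_star_ideal_not_superset:
  "maximal_star_ideal M \<Longrightarrow> integral_star_ideal D st X \<Longrightarrow> X \<subseteq> M \<Longrightarrow> X \<noteq> D"
  using maximal_star_ideal_one D_one by blast

lemma union_chain_integral_star_ideal:
  assumes C: "C \<noteq> {}" "subset.chain {N. integral_star_ideal D st N \<and> N \<noteq> D} C"
  shows "integral_star_ideal D st (\<Union>C) \<and> \<Union>C \<noteq> D"
proof -
  have mem: "integral_star_ideal D st N" "1 \<notin> N" if "N \<in> C" for N
    using C(2) that integral_star_ideal_eq_D unfolding subset_chain_def by blast+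
  have total: "N1 \<subseteq> N2 \<or> N2 \<subseteq> N1" if "N1 \<in> C" "N2 \<in> C" for N1 N2
    using C(2) that unfolding subset_chain_def by (auto dest: chainsD)
  have dm: "dmodule D N" if "N \<in> C" for N using integral_star_ideal_dmodule mem that by blast
  obtain N0 where N0: "N0 \<in> C" using C(1) by blast
  have dmU: "dmodule D (\<Union>C)" unfolding dmodule_def
  proof (intro conjI ballI)
    show "0 \<in> \<Union>C" using N0 dm dmodule_zero by blast
    fix x y assume "x \<in> \<Union>C" "y \<in> \<Union>C"
    then obtain N1 N2 where N: "N1 \<in> C" "N2 \<in> C" "x \<in> N1" "y \<in> N2" by blast
    then show "x + y \<in> \<Union>C" using total[OF N(1,2)] dmodule_add[OF dm[OF N(1)]] dmodule_add[OF dm[OF N(2)]]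
      by blast
  next
    fix d x assume "d \<in> D" "x \<in> \<Union>C"
    then show "d * x \<in> \<Union>C" using dm dmodule_mult by blast
  qed
  have UD: "\<Union>C \<subseteq> D" using mem integral_star_ideal_subset by blast
  have "N0 \<noteq> {0}" using frac_ideal_nonzero integral_star_ideal_frac mem(1)[OF N0] by blast
  then have Ufrac: "frac_ideal D (\<Union>C)" using frac_ideal_integralI[OF dmU UD] N0 dmodule_zero[OF dm[OF N0]] by blast
  \<comment> \<open>finite character: st of the union is covered by st of finitely generated subideals,
      and each of those lies in a single member of the chain\<close>
  have "st (\<Union>C) \<subseteq> \<Union>C"
  proof
    fix z assume "z \<in> st (\<Union>C)"
    then obtain J where J: "z \<in> st J" "J \<subseteq> \<Union>C" "fin_gen D J" "J \<noteq> {0}"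
      using star_finite_character[OF Ufrac] by blast
    obtain F where F: "finite F" "J = gen D F" using J(3) unfolding fin_gen_def by blast
    obtain N where N: "N \<in> C" "F \<subseteq> N"
      using finite_subset_Union_chain[OF F(1) _ C(1), of "{N. integral_star_ideal D st N \<and> N \<noteq> D}"]
        gen_superset[OF F(1)] F(2) J(2) C(2) by blast
    have "J \<subseteq> N" unfolding F(2) using gen_subset[OF dm[OF N(1)] N(2)] .
    then have "st J \<subseteq> N"
      using star_mono[OF _ integral_star_ideal_frac[OF mem(1)[OF N(1)]]] frac_ideal_gen[OF F(1)] F(2) J(4)
        integral_star_ideal_fixed[OF mem(1)[OF N(1)]] by simp
    then show "z \<in> \<Union>C" using J(1) N(1) by blast
  qed
  then have "integral_star_ideal D st (\<Union>C)"
    unfolding integral_star_ideal_iff using star_extensive[OF Ufrac] Ufrac UD by blast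
  moreover have "\<Union>C \<noteq> D" using mem(2) D_one by blast
  ultimately show ?thesis ..
qed

lemma exists_maximal_star_ideal:
  assumes "integral_star_ideal D st I" "I \<noteq> D"
  shows "\<exists>M. maximal_star_ideal M \<and> I \<subseteq> M"
proof -
  define \<A> where "\<A> = {N. integral_star_ideal D st N \<and> N \<noteq> D \<and> I \<subseteq> N}"
  have "\<exists>M\<in>\<A>. \<forall>X\<in>\<A>. M \<subseteq> X \<longrightarrow> X = M"
  proof (rule subset_Zorn_nonempty)
    show "\<A> \<noteq> {}" using assms unfolding \<A>_def by blast
  next
    fix C assume C: "C \<noteq> {}" "subset.chain \<A> C"
    have "\<A> \<subseteq> {N. integral_star_ideal D st N \<and> N \<noteq> D}" unfolding \<A>_def by blast
    then have "subset.chain {N. integral_star_ideal D st N \<and> N \<noteq> D} C"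
      using C(2) unfolding subset_chain_def by blast
    moreover have "I \<subseteq> \<Union>C" using C unfolding \<A>_def subset_chain_def by blast
    ultimately show "\<Union>C \<in> \<A>" using union_chain_integral_star_ideal[OF C(1)] unfolding \<A>_def by blast
  qed
  then obtain M where M: "M \<in> \<A>" "\<And>N. N \<in> \<A> \<Longrightarrow> M \<subseteq> N \<Longrightarrow> N = M" by blast
  have "maximal_star_ideal M" unfolding maximal_star_ideal_def
  proof (intro conjI allI impI)
    show "integral_star_ideal D st M" "M \<noteq> D" using M(1) unfolding \<A>_def by blast+
    fix N assume "integral_star_ideal D st N \<and> N \<noteq> D \<and> M \<subseteq> N"
    moreover have "I \<subseteq> M" using M(1) unfolding \<A>_def by blast
    ultimately show "N = M" using M(2) unfolding \<A>_def by blast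
  qed
  moreover have "I \<subseteq> M" using M(1) unfolding \<A>_def by blast
  ultimately show ?thesis by blast
qed

lemma star_ideal_sum_principal_eq_D:
  assumes M: "maximal_star_ideal M" and a: "a \<in> D" "a \<notin> M"
  shows "st (ideal_sum M (principal D a)) = D"
proof -
  let ?P = "ideal_sum M (principal D a)"
  note Mi = maximal_star_ideal_integral[OF M]
  have Pf: "frac_ideal D ?P"
    using frac_ideal_ideal_sum[OF integral_star_ideal_frac[OF Mi] integral_star_ideal_subset[OF Mi]
        dmodule_principal principal_subset_D] a(1) by blast
  have "?P \<subseteq> D"
    using ideal_sum_subset[OF dmodule_D integral_star_ideal_subset[OF Mi] principal_subset_D[OF a(1)]] .
  then have "integral_star_ideal D st (st ?P)" using integral_star_ideal_star[OF Pf] by blast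
  moreover have "a \<in> st ?P" "M \<subseteq> st ?P"
    using mem_principal_self subset_ideal_sum_right[OF integral_star_ideal_dmodule[OF Mi]]
      subset_ideal_sum_left[OF dmodule_principal[OF a(1)]] star_extensive[OF Pf] by blast+
  ultimately show ?thesis using maximal_star_ideal_eqI[OF M] a(2) by blast
qed

lemma maximal_star_ideal_prime:
  assumes M: "maximal_star_ideal M" and ab: "a \<in> D" "b \<in> D" "a * b \<in> M"
  shows "a \<in> M \<or> b \<in> M"
proof (rule ccontr)
  assume "\<not> (a \<in> M \<or> b \<in> M)"
  then have nM: "a \<notin> M" "b \<notin> M" by simp_all
  let ?P = "ideal_sum M (principal D a)" and ?Q = "ideal_sum M (principal D b)"
  note Mi = maximal_star_ideal_integral[OF M]
  have dmM: "dmodule D M" and MD: "M \<subseteq> D"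
    using integral_star_ideal_dmodule[OF Mi] integral_star_ideal_subset[OF Mi] .
  have frac: "frac_ideal D (ideal_sum M (principal D x))" if "x \<in> D" for x
    using frac_ideal_ideal_sum[OF integral_star_ideal_frac[OF Mi] MD dmodule_principal principal_subset_D]
      that by blast
  \<comment> \<open>(M + Da)(M + Db) \<subseteq> M, while both factors have st equal to D\<close>
  have "ideal_prod ?P ?Q \<subseteq> M"
  proof (rule ideal_prod_subsetI[OF dmodule_zero[OF dmM] _ dmodule_add[OF dmM]])
    fix x y assume "x \<in> ?P" "y \<in> ?Q"
    then obtain m d m' d' where x: "x = m + d * a" "m \<in> M" "d \<in> D"
      and y: "y = m' + d' * b" "m' \<in> M" "d' \<in> D"
      unfolding ideal_sum_def principal_def by blast
    have "x * y = m' * m + (d' * b) * m + (d * a) * m' + (d * d') * (a * b)"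
      unfolding x(1) y(1) by algebra
    moreover have "m' * m \<in> M" "(d' * b) * m \<in> M" "(d * a) * m' \<in> M" "(d * d') * (a * b) \<in> M"
      using x y ab MD by (auto intro!: dmodule_mult[OF dmM] D_mult)
    ultimately show "x * y \<in> M" using dmodule_add[OF dmM] by simp
  qed
  then have "st (ideal_prod ?P ?Q) \<subseteq> M"
    using star_mono[OF frac_ideal_ideal_prod[OF frac frac] integral_star_ideal_frac[OF Mi]] ab
      integral_star_ideal_fixed[OF Mi] by simp
  moreover have "st (ideal_prod ?P ?Q) = D"
    using star_ideal_prod_star_left[OF frac[OF ab(1)] frac[OF ab(2)]]
      star_ideal_prod_star_right[OF star_frac_ideal[OF frac[OF ab(1)]] frac[OF ab(2)]]
      star_ideal_sum_principal_eq_D[OF M] ab nM ideal_prod_D_right[OF dmodule_D] star_D by simp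
  ultimately show False using maximal_star_ideal_one[OF M] D_one by blast
qed

lemma ideal_prod_subset_maximal_star_ideal:
  assumes M: "maximal_star_ideal M" and "X \<subseteq> D" "Y \<subseteq> D" "ideal_prod X Y \<subseteq> M"
  shows "X \<subseteq> M \<or> Y \<subseteq> M"
proof (rule ccontr)
  assume "\<not> (X \<subseteq> M \<or> Y \<subseteq> M)"
  then obtain a b where "a \<in> X" "a \<notin> M" "b \<in> Y" "b \<notin> M" by blast
  then show False using maximal_star_ideal_prime[OF M] mult_mem_ideal_prod[of a X b Y] assms(2-4) by blast
qed

lemma star_comaximal_iff:
  assumes X: "integral_star_ideal D st X" and Y: "integral_star_ideal D st Y"
  shows "star_comaximal D st X Y \<longleftrightarrow> (\<nexists>M. maximal_star_ideal M \<and> X \<subseteq> M \<and> Y \<subseteq> M)"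
proof -
  note dm = integral_star_ideal_dmodule
  have S: "frac_ideal D (ideal_sum X Y)" "ideal_sum X Y \<subseteq> D"
    using frac_ideal_ideal_sum[OF integral_star_ideal_frac[OF X] integral_star_ideal_subset[OF X] dm[OF Y]
        integral_star_ideal_subset[OF Y]]
      ideal_sum_subset[OF dmodule_D integral_star_ideal_subset[OF X] integral_star_ideal_subset[OF Y]] .
  have "st (ideal_sum X Y) \<subseteq> M \<longleftrightarrow> X \<subseteq> M \<and> Y \<subseteq> M" if M: "maximal_star_ideal M" for M
  proof
    assume "st (ideal_sum X Y) \<subseteq> M"
    then show "X \<subseteq> M \<and> Y \<subseteq> M"
      using star_extensive[OF S(1)] subset_ideal_sum_left[OF dm[OF Y]] subset_ideal_sum_right[OF dm[OF X]]
      by blast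
  next
    note Mi = maximal_star_ideal_integral[OF M]
    assume "X \<subseteq> M \<and> Y \<subseteq> M"
    then have "ideal_sum X Y \<subseteq> M" using ideal_sum_subset[OF dm[OF Mi]] by blast
    then show "st (ideal_sum X Y) \<subseteq> M"
      using star_mono[OF S(1) integral_star_ideal_frac[OF Mi]] integral_star_ideal_fixed[OF Mi] by simp
  qed
  moreover have "st (ideal_sum X Y) = D \<longleftrightarrow> (\<nexists>M. maximal_star_ideal M \<and> st (ideal_sum X Y) \<subseteq> M)"
    using exists_maximal_star_ideal[OF integral_star_ideal_star[OF S]] maximal_star_ideal_one D_one
    by blast
  ultimately show ?thesis unfolding star_comaximal_def by blast
qed

lemma maximal_star_ideals_star_comaximal:
  assumes M1: "maximal_star_ideal M1" and M2: "maximal_star_ideal M2" and "M1 \<noteq> M2"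
  shows "star_comaximal D st M1 M2"
  unfolding star_comaximal_iff[OF maximal_star_ideal_integral[OF M1] maximal_star_ideal_integral[OF M2]]
proof
  assume "\<exists>M. maximal_star_ideal M \<and> M1 \<subseteq> M \<and> M2 \<subseteq> M"
  then obtain M where M: "maximal_star_ideal M" "M1 \<subseteq> M" "M2 \<subseteq> M" by blast
  note eq = maximal_star_ideal_eqI[OF _ maximal_star_ideal_integral[OF M(1)]
      maximal_star_ideal_not_superset[OF M(1) maximal_star_ideal_integral[OF M(1)] order_refl]]
  show False using eq[OF M1 M(2)] eq[OF M2 M(3)] \<open>M1 \<noteq> M2\<close> by simp
qed

subsection \<open>Homogeneous ideals\<close>

lemma finite_type_iff: "finite_type D st I \<longleftrightarrow> (\<exists>F. finite F \<and> gen D F \<noteq> {0} \<and> I = st (gen D F))"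
  unfolding finite_type_def fin_gen_def by blast

lemma star_comaximal_finite_witness:
  assumes X: "integral_star_ideal D st X" and Y: "integral_star_ideal D st Y"
    and XY: "star_comaximal D st X Y"
  shows "\<exists>F G. finite F \<and> F \<subseteq> X \<and> finite G \<and> G \<subseteq> Y \<and>
    frac_ideal D (ideal_sum (gen D F) (gen D G)) \<and> star_comaximal D st (gen D F) (gen D G)"
proof -
  note dm = integral_star_ideal_dmodule and sub = integral_star_ideal_subset
  have XYf: "frac_ideal D (ideal_sum X Y)"
    by (rule frac_ideal_ideal_sum[OF integral_star_ideal_frac[OF X] sub[OF X] dm[OF Y] sub[OF Y]])
  have "1 \<in> st (ideal_sum X Y)" using XY D_one unfolding star_comaximal_def by simp
  then obtain J where J: "1 \<in> st J" "J \<subseteq> ideal_sum X Y" "fin_gen D J" "J \<noteq> {0}"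
    using star_finite_character[OF XYf] by blast
  obtain H where H: "finite H" "J = gen D H" using J(3) unfolding fin_gen_def by blast
  have Jfrac: "frac_ideal D J" using frac_ideal_gen[OF H(1)] H(2) J(4) by simp
  have "\<exists>p. h = fst p + snd p \<and> fst p \<in> X \<and> snd p \<in> Y" if "h \<in> H" for h
  proof -
    have "h \<in> ideal_sum X Y" using gen_superset[OF H(1)] H(2) J(2) that by blast
    then obtain a b where "h = a + b" "a \<in> X" "b \<in> Y" unfolding ideal_sum_def by blast
    then show ?thesis by (intro exI[of _ "(a, b)"]) simp
  qed
  then obtain g where g: "\<forall>h\<in>H. h = fst (g h) + snd (g h) \<and> fst (g h) \<in> X \<and> snd (g h) \<in> Y"
    by (metis (no_types))
  define F where "F = (fst \<circ> g) ` H"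
  define G where "G = (snd \<circ> g) ` H"
  have FG: "finite F" "F \<subseteq> X" "finite G" "G \<subseteq> Y" using H(1) g unfolding F_def G_def by auto
  let ?S = "ideal_sum (gen D F) (gen D G)"
  have dmS: "dmodule D ?S" using dmodule_ideal_sum[OF gen_dmodule gen_dmodule] .
  have "H \<subseteq> ?S"
  proof
    fix h assume h: "h \<in> H"
    have "fst (g h) \<in> gen D F" "snd (g h) \<in> gen D G"
      using gen_superset[OF FG(1)] gen_superset[OF FG(3)] h unfolding F_def G_def by auto
    then show "h \<in> ?S" unfolding ideal_sum_def using g h by blast
  qed
  then have JS: "J \<subseteq> ?S" unfolding H(2) by (rule gen_subset[OF dmS])
  have SD: "?S \<subseteq> D"
    using ideal_sum_mono[OF gen_subset[OF dm[OF X] FG(2)] gen_subset[OF dm[OF Y] FG(4)]]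
      ideal_sum_subset[OF dmodule_D sub[OF X] sub[OF Y]] by (rule order_trans)
  have "?S \<noteq> {0}" using JS frac_ideal_ex_nonzero[OF Jfrac] by blast
  then have Sfrac: "frac_ideal D ?S" using frac_ideal_integralI[OF dmS SD] by blast
  have "1 \<in> st ?S" using star_mono[OF Jfrac Sfrac JS] J(1) by blast
  then have "st ?S = D" by (rule integral_star_ideal_eq_D[OF integral_star_ideal_star[OF Sfrac SD]])
  then show ?thesis unfolding star_comaximal_def using FG Sfrac by blast
qed

lemma star_gen_Un_in_maximal:
  assumes H: "finite H" "gen D H \<noteq> {0}" and E: "finite E"
    and M: "maximal_star_ideal M" "E \<subseteq> M" "st (gen D H) \<subseteq> M"
  defines "J \<equiv> st (gen D (E \<union> H))"
  shows "integral_star_ideal D st J \<and> finite_type D st J \<and> J \<noteq> D \<and> st (gen D H) \<subseteq> J \<and> gen D E \<subseteq> J"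
proof -
  note Mi = maximal_star_ideal_integral[OF M(1)]
  have fin: "finite (E \<union> H)" using E H(1) by simp
  have "gen D H \<subseteq> gen D (E \<union> H)" using gen_mono[OF fin] by blast
  then have nz: "gen D (E \<union> H) \<noteq> {0}" using frac_ideal_ex_nonzero[OF frac_ideal_gen[OF H]] by blast
  note fr = frac_ideal_gen[OF fin nz]
  have "H \<subseteq> M" using gen_superset[OF H(1)] star_extensive[OF frac_ideal_gen[OF H]] M(3) by blast
  then have sub: "gen D (E \<union> H) \<subseteq> M" using gen_subset[OF integral_star_ideal_dmodule[OF Mi]] M(2) by blast
  then have "J \<subseteq> M"
    unfolding J_def using star_mono[OF fr integral_star_ideal_frac[OF Mi]] integral_star_ideal_fixed[OF Mi] by simp
  moreover have "integral_star_ideal D st J"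
    unfolding J_def using integral_star_ideal_star[OF fr] sub integral_star_ideal_subset[OF Mi] by blast
  moreover have "finite_type D st J" unfolding J_def finite_type_iff using fin nz by blast
  moreover have "st (gen D H) \<subseteq> J"
    unfolding J_def using star_mono[OF frac_ideal_gen[OF H] fr] gen_mono[OF fin] by blast
  moreover have "gen D E \<subseteq> J" unfolding J_def using star_extensive[OF fr] gen_mono[OF fin] by blast
  ultimately show ?thesis using maximal_star_ideal_not_superset[OF M(1)] by blast
qed

lemma star_homog_integral: "star_homog D st I \<Longrightarrow> integral_star_ideal D st I"
  and star_homog_finite_type: "star_homog D st I \<Longrightarrow> finite_type D st I"
  and star_homog_ne_D: "star_homog D st I \<Longrightarrow> I \<noteq> D"
  unfolding star_homog_def by blast+

lemma star_homog_frac: "star_homog D st I \<Longrightarrow> frac_ideal D I"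
  by (rule integral_star_ideal_frac[OF star_homog_integral])

lemma star_homog_not_star_comaximal:
  assumes "star_homog D st I"
    "integral_star_ideal D st J" "finite_type D st J" "J \<noteq> D" "I \<subseteq> J"
    "integral_star_ideal D st L" "finite_type D st L" "L \<noteq> D" "I \<subseteq> L"
  shows "\<not> star_comaximal D st J L"
  using assms unfolding star_homog_def star_comaximal_def by blast

lemma star_homog_not_star_comaximal_self: "star_homog D st I \<Longrightarrow> \<not> star_comaximal D st I I"
  unfolding star_comaximal_def
  using ideal_sum_self integral_star_ideal_dmodule integral_star_ideal_fixed star_homog_integral
    star_homog_ne_D by metis

lemma star_homog_unique_maximal:
  assumes I: "star_homog D st I" and M1: "maximal_star_ideal M1" "I \<subseteq> M1"
    and M2: "maximal_star_ideal M2" "I \<subseteq> M2"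
  shows "M1 = M2"
proof (rule ccontr)
  assume "M1 \<noteq> M2"
  then obtain F G where FG: "finite F" "F \<subseteq> M1" "finite G" "G \<subseteq> M2"
    "frac_ideal D (ideal_sum (gen D F) (gen D G))" "star_comaximal D st (gen D F) (gen D G)"
    using star_comaximal_finite_witness[OF maximal_star_ideal_integral[OF M1(1)]
        maximal_star_ideal_integral[OF M2(1)] maximal_star_ideals_star_comaximal[OF M1(1) M2(1)]]
    by blast
  obtain H where H: "finite H" "gen D H \<noteq> {0}" "I = st (gen D H)"
    using star_homog_finite_type[OF I] unfolding finite_type_iff by blast
  \<comment> \<open>adjoin to generators of I generators of M1 resp. M2 witnessing their comaximality\<close>
  define J1 where "J1 = st (gen D (F \<union> H))"
  define J2 where "J2 = st (gen D (G \<union> H))"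
  have J1: "integral_star_ideal D st J1" "finite_type D st J1" "J1 \<noteq> D" "I \<subseteq> J1" "gen D F \<subseteq> J1"
    using star_gen_Un_in_maximal[OF H(1,2) FG(1) M1(1) FG(2)] M1(2) unfolding J1_def H(3) by blast+
  have J2: "integral_star_ideal D st J2" "finite_type D st J2" "J2 \<noteq> D" "I \<subseteq> J2" "gen D G \<subseteq> J2"
    using star_gen_Un_in_maximal[OF H(1,2) FG(3) M2(1) FG(4)] M2(2) unfolding J2_def H(3) by blast+
  have S: "frac_ideal D (ideal_sum J1 J2)" "ideal_sum J1 J2 \<subseteq> D"
    using frac_ideal_ideal_sum[OF integral_star_ideal_frac[OF J1(1)] integral_star_ideal_subset[OF J1(1)]
        integral_star_ideal_dmodule[OF J2(1)] integral_star_ideal_subset[OF J2(1)]]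
      ideal_sum_subset[OF dmodule_D integral_star_ideal_subset[OF J1(1)] integral_star_ideal_subset[OF J2(1)]] .
  have "D \<subseteq> st (ideal_sum J1 J2)"
    using star_mono[OF FG(5) S(1) ideal_sum_mono[OF J1(5) J2(5)]] FG(6) unfolding star_comaximal_def by blast
  then have "star_comaximal D st J1 J2"
    using integral_star_ideal_subset[OF integral_star_ideal_star[OF S]] unfolding star_comaximal_def by blast
  then show False using star_homog_not_star_comaximal[OF I J1(1-4) J2(1-4)] by blast
qed

lemma star_homogI:
  assumes X: "integral_star_ideal D st X" "finite_type D st X" "X \<noteq> D"
    and unique: "\<And>M N. maximal_star_ideal M \<Longrightarrow> maximal_star_ideal N \<Longrightarrow> X \<subseteq> M \<Longrightarrow> X \<subseteq> N \<Longrightarrow> M = N"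
  shows "star_homog D st X"
  unfolding star_homog_def
proof (intro conjI allI impI)
  fix J L assume "integral_star_ideal D st J \<and> finite_type D st J \<and> J \<noteq> D \<and> X \<subseteq> J \<and>
    integral_star_ideal D st L \<and> finite_type D st L \<and> L \<noteq> D \<and> X \<subseteq> L"
  then have J: "integral_star_ideal D st J" "J \<noteq> D" "X \<subseteq> J"
    and L: "integral_star_ideal D st L" "L \<noteq> D" "X \<subseteq> L" by simp_all
  obtain M where M: "maximal_star_ideal M" "J \<subseteq> M" using exists_maximal_star_ideal[OF J(1,2)] by blast
  obtain N where N: "maximal_star_ideal N" "L \<subseteq> N" using exists_maximal_star_ideal[OF L(1,2)] by blast
  have "M = N" using unique[OF M(1) N(1)] M(2) N(2) J(3) L(3) by blast
  then have "\<not> star_comaximal D st J L" unfolding star_comaximal_iff[OF J(1) L(1)] using M N by blast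
  then show "st (ideal_sum J L) \<noteq> D" unfolding star_comaximal_def .
qed (fact X)+

lemma gen_ideal_prod:
  assumes F: "finite F" and G: "finite G"
  shows "ideal_prod (gen D F) (gen D G) = gen D ((\<lambda>(x, y). x * y) ` (F \<times> G))"
    (is "_ = gen D ?H")
proof
  have dH: "dmodule D (gen D ?H)" by (rule gen_dmodule)
  have Hs: "?H \<subseteq> gen D ?H" using F G by (intro gen_superset) simp
  show "ideal_prod (gen D F) (gen D G) \<subseteq> gen D ?H"
  proof (rule ideal_prod_subsetI[OF dmodule_zero[OF dH] _ dmodule_add[OF dH]])
    fix a b assume "a \<in> gen D F" "b \<in> gen D G"
    then obtain c e where c: "a = (\<Sum>x\<in>F. c x * x)" "\<forall>x\<in>F. c x \<in> D"
      and e: "b = (\<Sum>y\<in>G. e y * y)" "\<forall>y\<in>G. e y \<in> D" unfolding mem_gen_iff by blast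
    have "a * b = (\<Sum>x\<in>F. \<Sum>y\<in>G. (c x * e y) * (x * y))"
      unfolding c(1) e(1) sum_product by (simp add: ac_simps)
    also have "\<dots> \<in> gen D ?H"
    proof (intro dmodule_sum[OF dH])
      fix x y assume "x \<in> F" "y \<in> G"
      then have "x * y \<in> ?H" by (intro rev_image_eqI[of "(x, y)"]) simp_all
      then have "c x * e y \<in> D" "x * y \<in> gen D ?H" using c(2) e(2) \<open>x \<in> F\<close> \<open>y \<in> G\<close> D_mult Hs
        by blast+
      then show "(c x * e y) * (x * y) \<in> gen D ?H" by (rule dmodule_mult[OF dH])
    qed
    finally show "a * b \<in> gen D ?H" .
  qed
  show "gen D ?H \<subseteq> ideal_prod (gen D F) (gen D G)"
  proof (intro gen_subset[OF dmodule_ideal_prod[OF gen_dmodule]] subsetI)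
    fix z assume "z \<in> ?H"
    then obtain x y where "x \<in> F" "y \<in> G" "z = x * y" by auto
    then have "x \<in> gen D F" "y \<in> gen D G" "z = x * y" using gen_superset[OF F] gen_superset[OF G] by blast+
    then show "z \<in> ideal_prod (gen D F) (gen D G)" using mult_mem_ideal_prod by blast
  qed
qed

lemma finite_type_star_ideal_prod:
  assumes "finite_type D st I" "finite_type D st J"
  shows "finite_type D st (st (ideal_prod I J))"
proof -
  obtain F G where F: "finite F" "gen D F \<noteq> {0}" "I = st (gen D F)"
    and G: "finite G" "gen D G \<noteq> {0}" "J = st (gen D G)"
    using assms unfolding finite_type_iff by blast
  note Ff = frac_ideal_gen[OF F(1,2)] and Gf = frac_ideal_gen[OF G(1,2)]
  define H where "H = (\<lambda>(x, y). x * y) ` (F \<times> G)"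
  have "st (ideal_prod I J) = st (ideal_prod (gen D F) (gen D G))"
    unfolding F(3) G(3) star_ideal_prod_star_left[OF Ff star_frac_ideal[OF Gf]]
    by (rule star_ideal_prod_star_right[OF Ff Gf])
  also have "ideal_prod (gen D F) (gen D G) = gen D H" unfolding H_def by (rule gen_ideal_prod[OF F(1) G(1)])
  finally have "st (ideal_prod I J) = st (gen D H)" .
  moreover have "gen D H \<noteq> {0}"
    using frac_ideal_nonzero[OF frac_ideal_ideal_prod[OF Ff Gf]] gen_ideal_prod[OF F(1) G(1)]
    unfolding H_def by simp
  moreover have "finite H" unfolding H_def using F(1) G(1) by simp
  ultimately show ?thesis unfolding finite_type_iff by blast
qed

lemma star_homog_star_ideal_prod:
  assumes I: "star_homog D st I" and J: "star_homog D st J"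
    and M: "maximal_star_ideal M" "I \<subseteq> M" "J \<subseteq> M"
  shows "star_homog D st (st (ideal_prod I J)) \<and> st (ideal_prod I J) \<subseteq> M"
proof -
  note Ii = star_homog_integral[OF I] and Ji = star_homog_integral[OF J]
  have IJf: "frac_ideal D (ideal_prod I J)"
    using frac_ideal_ideal_prod[OF integral_star_ideal_frac[OF Ii] integral_star_ideal_frac[OF Ji]] .
  have IJI: "ideal_prod I J \<subseteq> I"
    using ideal_prod_subset_left[OF integral_star_ideal_dmodule[OF Ii] integral_star_ideal_subset[OF Ji]] .
  then have sub: "st (ideal_prod I J) \<subseteq> I"
    using star_mono[OF IJf integral_star_ideal_frac[OF Ii]] integral_star_ideal_fixed[OF Ii] by simp
  have integral: "integral_star_ideal D st (st (ideal_prod I J))"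
    using integral_star_ideal_star[OF IJf] IJI integral_star_ideal_subset[OF Ii] by blast
  \<comment> \<open>a maximal star ideal containing IJ contains I or J, hence it is the one above I and J\<close>
  have "N = M" if N: "maximal_star_ideal N" "st (ideal_prod I J) \<subseteq> N" for N
  proof -
    have "ideal_prod I J \<subseteq> N" using star_extensive[OF IJf] N(2) by (rule order_trans)
    then have "I \<subseteq> N \<or> J \<subseteq> N"
      by (rule ideal_prod_subset_maximal_star_ideal[OF N(1) integral_star_ideal_subset[OF Ii]
            integral_star_ideal_subset[OF Ji]])
    then show "N = M"
      using star_homog_unique_maximal[OF I N(1) _ M(1,2)] star_homog_unique_maximal[OF J N(1) _ M(1,3)]
      by blast
  qed
  moreover have "st (ideal_prod I J) \<noteq> D" using sub star_homog_ne_D[OF I] integral_star_ideal_subset[OF Ii] by blast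
  ultimately have "star_homog D st (st (ideal_prod I J))"
    using star_homogI[OF integral finite_type_star_ideal_prod[OF star_homog_finite_type[OF I]
          star_homog_finite_type[OF J]]] by blast
  then show ?thesis using sub M(2) by blast
qed

lemma star_comaximal_commute: "star_comaximal D st I J \<longleftrightarrow> star_comaximal D st J I"
  unfolding star_comaximal_def by (simp add: ideal_sum_commute)

lemma star_homog_star_comaximal_iff:
  assumes X: "star_homog D st X" "maximal_star_ideal M" "X \<subseteq> M" and Y: "integral_star_ideal D st Y"
  shows "star_comaximal D st X Y \<longleftrightarrow> \<not> Y \<subseteq> M"
  unfolding star_comaximal_iff[OF star_homog_integral[OF X(1)] Y]
proof
  assume "\<nexists>N. maximal_star_ideal N \<and> X \<subseteq> N \<and> Y \<subseteq> N"
  then show "\<not> Y \<subseteq> M" using X by blast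
next
  assume "\<not> Y \<subseteq> M"
  then show "\<nexists>N. maximal_star_ideal N \<and> X \<subseteq> N \<and> Y \<subseteq> N"
    using star_homog_unique_maximal[OF X(1) _ _ X(2,3)] by blast
qed

lemma frac_ideal_ideal_prod_list:
  "\<forall>K\<in>set Ks. frac_ideal D K \<Longrightarrow> frac_ideal D (ideal_prod_list D Ks)"
  by (induction Ks) (simp_all add: ideal_prod_list_Nil ideal_prod_list_Cons frac_ideal_D frac_ideal_ideal_prod)

lemma ideal_prod_list_subset_D:
  "\<forall>K\<in>set Ks. integral_star_ideal D st K \<Longrightarrow> ideal_prod_list D Ks \<subseteq> D"
proof (induction Ks)
  case (Cons K Ks)
  then have K: "integral_star_ideal D st K" and "ideal_prod_list D Ks \<subseteq> D" by simp_all
  then have "ideal_prod K (ideal_prod_list D Ks) \<subseteq> K"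
    by (intro ideal_prod_subset_left[OF integral_star_ideal_dmodule[OF K]])
  then show ?case using integral_star_ideal_subset[OF K] by (simp add: ideal_prod_list_Cons)
qed (simp add: ideal_prod_list_Nil)

lemma ideal_prod_list_subset_member:
  assumes "\<forall>K\<in>set Ks. integral_star_ideal D st K" "K \<in> set Ks"
  shows "ideal_prod_list D Ks \<subseteq> K"
proof -
  have "\<forall>K\<in>set (remove1 K Ks). integral_star_ideal D st K" using assms(1) by (meson notin_set_remove1)
  moreover have K: "integral_star_ideal D st K" using assms by simp
  ultimately show ?thesis unfolding ideal_prod_list_remove1[OF assms(2)]
    by (intro ideal_prod_subset_left[OF integral_star_ideal_dmodule[OF K]] ideal_prod_list_subset_D)
qed

lemma star_ideal_prod_list_subset_member:
  assumes "\<forall>K\<in>set Ks. integral_star_ideal D st K" "K \<in> set Ks"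
  shows "st (ideal_prod_list D Ks) \<subseteq> K"
proof -
  have K: "integral_star_ideal D st K" using assms by simp
  have "\<forall>K\<in>set Ks. frac_ideal D K" using assms(1) integral_star_ideal_frac by blast
  then have "st (ideal_prod_list D Ks) \<subseteq> st K"
    by (intro star_mono[OF frac_ideal_ideal_prod_list integral_star_ideal_frac[OF K]]
        ideal_prod_list_subset_member[OF assms])
  then show ?thesis using integral_star_ideal_fixed[OF K] by simp
qed

lemma ideal_prod_list_subset_maximal_star_ideal:
  assumes M: "maximal_star_ideal M" and "\<forall>K\<in>set Ks. integral_star_ideal D st K"
    and "ideal_prod_list D Ks \<subseteq> M"
  shows "\<exists>K\<in>set Ks. K \<subseteq> M"
  using assms(2,3)
proof (induction Ks)
  case Nil
  then show ?case using maximal_star_ideal_one[OF M] D_one by (simp add: ideal_prod_list_Nil subset_iff)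
next
  case (Cons K Ks)
  then have K: "integral_star_ideal D st K" and Ks: "\<forall>K\<in>set Ks. integral_star_ideal D st K" by simp_all
  have "K \<subseteq> M \<or> ideal_prod_list D Ks \<subseteq> M"
    using Cons.prems(2) unfolding ideal_prod_list_Cons
    by (rule ideal_prod_subset_maximal_star_ideal[OF M integral_star_ideal_subset[OF K]
          ideal_prod_list_subset_D[OF Ks]])
  then show ?case using Cons.IH Ks by auto
qed

subsection \<open>Existence of a comaximal factorization\<close>

lemma star_comaximal_factorization_Cons:
  assumes I: "star_homog D st I" and Js: "\<forall>J\<in>set Js. star_homog D st J" "distinct Js"
    "pairwise (star_comaximal D st) (set Js)"
  shows "\<exists>Js'. (\<forall>J\<in>set Js'. star_homog D st J) \<and> distinct Js' \<and>
    pairwise (star_comaximal D st) (set Js') \<and> st (ideal_prod_list D Js') = st (ideal_prod I (ideal_prod_list D Js))"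
proof (cases "\<forall>J\<in>set Js. star_comaximal D st I J")
  case True
  moreover have "\<forall>J\<in>set Js. star_comaximal D st J I" using True star_comaximal_commute[THEN iffD1] by blast
  moreover have "I \<notin> set Js" using True star_homog_not_star_comaximal_self[OF I] by blast
  ultimately show ?thesis using I Js
    by (intro exI[of _ "I # Js"]) (simp add: pairwise_insert ideal_prod_list_Cons)
next
  case False
  then obtain J where J: "J \<in> set Js" "\<not> star_comaximal D st I J" by blast
  have Jh: "star_homog D st J" using Js(1) J(1) by blast
  obtain M where M: "maximal_star_ideal M" "I \<subseteq> M" "J \<subseteq> M"
    using J(2) star_comaximal_iff[OF star_homog_integral[OF I] star_homog_integral[OF Jh]] by blast
  \<comment> \<open>merge I with the factor J sharing its maximal star ideal M\<close>
  define X where "X = st (ideal_prod I J)"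
  have X: "star_homog D st X" "X \<subseteq> M" using star_homog_star_ideal_prod[OF I Jh M] by (simp_all add: X_def)
  let ?R = "remove1 J Js"
  have R2: "set ?R = set Js - {J}" by (rule set_remove1_eq[OF Js(2)])
  then have R: "\<forall>K\<in>set ?R. star_homog D st K" "set ?R = set Js - {J}" using Js(1) by simp_all
  have XR: "star_comaximal D st X K" if "K \<in> set ?R" for K
  proof -
    have "star_homog D st K" using R(1) that by blast
    note K = star_homog_integral[OF this]
    have "K \<in> set Js" "K \<noteq> J" using that R(2) by simp_all
    then have "star_comaximal D st J K" using Js(3) J(1) unfolding pairwise_def by blast
    then have "\<not> K \<subseteq> M" by (simp add: star_homog_star_comaximal_iff[OF Jh M(1,3) K])
    then show ?thesis by (simp add: star_homog_star_comaximal_iff[OF X(1) M(1) X(2) K])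
  qed
  moreover have "X \<notin> set ?R" using calculation star_homog_not_star_comaximal_self[OF X(1)] by blast
  moreover have "pairwise (star_comaximal D st) (set ?R)" using Js(3) R(2) by (simp add: pairwise_subset)
  moreover have "st (ideal_prod_list D (X # ?R)) = st (ideal_prod I (ideal_prod_list D Js))"
  proof -
    have fr: "frac_ideal D (ideal_prod I J)" "frac_ideal D (ideal_prod_list D ?R)"
      using I Jh R(1) by (simp_all add: star_homog_frac frac_ideal_ideal_prod frac_ideal_ideal_prod_list)
    have "st (ideal_prod_list D (X # ?R)) = st (ideal_prod (ideal_prod I J) (ideal_prod_list D ?R))"
      unfolding ideal_prod_list_Cons X_def by (rule star_ideal_prod_star_left[OF fr])
    also have "\<dots> = st (ideal_prod I (ideal_prod_list D Js))"
      unfolding ideal_prod_assoc ideal_prod_list_remove1[OF J(1), symmetric] ..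
    finally show ?thesis .
  qed
  moreover have "\<forall>K\<in>set ?R. star_comaximal D st K X" using XR star_comaximal_commute[THEN iffD1] by blast
  ultimately show ?thesis using X(1) R(1) distinct_remove1[OF Js(2)] XR
    by (intro exI[of _ "X # ?R"]) (simp add: pairwise_insert)
qed

lemma exists_star_comaximal_factorization:
  "\<forall>I\<in>set Is. star_homog D st I \<Longrightarrow> \<exists>Js. (\<forall>J\<in>set Js. star_homog D st J) \<and> distinct Js \<and>
    pairwise (star_comaximal D st) (set Js) \<and> st (ideal_prod_list D Js) = st (ideal_prod_list D Is)"
proof (induction Is)
  case Nil
  show ?case by (intro exI[of _ "[]"]) simp
next
  case (Cons I Is)
  then obtain Js where Js: "\<forall>J\<in>set Js. star_homog D st J" "distinct Js"
    "pairwise (star_comaximal D st) (set Js)" "st (ideal_prod_list D Js) = st (ideal_prod_list D Is)"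
    by auto
  have fr: "frac_ideal D I" "frac_ideal D (ideal_prod_list D Is)" "frac_ideal D (ideal_prod_list D Js)"
    using Cons.prems Js(1) by (simp_all add: star_homog_frac frac_ideal_ideal_prod_list)
  have "st (ideal_prod_list D (I # Is)) = st (ideal_prod I (ideal_prod_list D Js))"
    using star_ideal_prod_star_right[OF fr(1,2)] star_ideal_prod_star_right[OF fr(1,3)] Js(4)
    by (simp add: ideal_prod_list_Cons)
  then show ?case using star_comaximal_factorization_Cons[OF _ Js(1-3)] Cons.prems by simp
qed

subsection \<open>Uniqueness of the comaximal factorization\<close>

text \<open>The M-saturation of A, i.e. the contraction A D_M \<inter> D of the localization of A at M.\<close>

definition saturation :: "'k set \<Rightarrow> 'k set \<Rightarrow> 'k set" where
  "saturation A M = {x \<in> D. \<exists>s\<in>D. s \<notin> M \<and> s * x \<in> A}"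

lemma star_ideal_cancel:
  assumes K: "integral_star_ideal D st K" and s: "s \<in> D" "star_comaximal D st K (principal D s)"
    and x: "x \<in> D" "s * x \<in> K"
  shows "x \<in> K"
proof (cases "x = 0")
  case True then show ?thesis using dmodule_zero[OF integral_star_ideal_dmodule[OF K]] by simp
next
  case False
  let ?T = "ideal_sum K (principal D s)"
  note dmK = integral_star_ideal_dmodule[OF K]
  have Tf: "frac_ideal D ?T"
    using frac_ideal_ideal_sum[OF integral_star_ideal_frac[OF K] integral_star_ideal_subset[OF K]
        dmodule_principal[OF s(1)] principal_subset_D[OF s(1)]] .
  \<comment> \<open>x (K + D s) \<subseteq> K because s x \<in> K; since st (K + D s) = D, x lies in st (x (K + D s)) \<subseteq> K\<close>
  have "scale x ?T \<subseteq> K"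
  proof
    fix z assume "z \<in> scale x ?T"
    then obtain k d where z: "z = x * (k + d * s)" "k \<in> K" "d \<in> D"
      unfolding scale_def ideal_sum_def principal_def by blast
    have "z = x * k + d * (s * x)" unfolding z(1) by algebra
    then show "z \<in> K" using dmodule_add[OF dmK] dmodule_mult[OF dmK] x z(2,3) by simp
  qed
  then have "st (scale x ?T) \<subseteq> K"
    using star_mono[OF frac_ideal_scale[OF Tf False] integral_star_ideal_frac[OF K]]
      integral_star_ideal_fixed[OF K] by simp
  moreover have "x \<in> scale x (st ?T)"
    using s(2) D_one unfolding star_comaximal_def scale_def by force
  ultimately show ?thesis using star_scale[OF False Tf] by blast
qed

lemma star_homog_cancel:
  assumes K: "star_homog D st K" and M: "maximal_star_ideal M" "K \<subseteq> M"
    and s: "s \<in> D" "s \<notin> M" and x: "x \<in> D" "s * x \<in> K"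
  shows "x \<in> K"
proof (rule star_ideal_cancel[OF star_homog_integral[OF K] s(1) _ x])
  note Ki = star_homog_integral[OF K]
  let ?T = "ideal_sum K (principal D s)"
  have Tf: "frac_ideal D ?T" "?T \<subseteq> D"
    using frac_ideal_ideal_sum[OF integral_star_ideal_frac[OF Ki] integral_star_ideal_subset[OF Ki]
        dmodule_principal[OF s(1)] principal_subset_D[OF s(1)]]
      ideal_sum_subset[OF dmodule_D integral_star_ideal_subset[OF Ki] principal_subset_D[OF s(1)]] .
  show "star_comaximal D st K (principal D s)" unfolding star_comaximal_def
  proof (rule ccontr)
    assume "st ?T \<noteq> D"
    then obtain N where N: "maximal_star_ideal N" "st ?T \<subseteq> N"
      using exists_maximal_star_ideal[OF integral_star_ideal_star[OF Tf]] by blast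
    have TN: "?T \<subseteq> N" using star_extensive[OF Tf(1)] N(2) by (rule order_trans)
    have "K \<subseteq> N" using TN subset_ideal_sum_left[OF dmodule_principal[OF s(1)]] by blast
    then have "N = M" using star_homog_unique_maximal[OF K N(1) _ M] by blast
    moreover have "s \<in> ?T"
      using subset_ideal_sum_right[OF integral_star_ideal_dmodule[OF Ki]] mem_principal_self by blast
    ultimately show False using TN s(2) by blast
  qed
qed

lemma star_comaximal_factorization_saturation:
  assumes Ks: "\<forall>K\<in>set Ks. star_homog D st K" "distinct Ks" "pairwise (star_comaximal D st) (set Ks)"
    and A: "A = st (ideal_prod_list D Ks)"
    and K: "K \<in> set Ks" and M: "maximal_star_ideal M" "K \<subseteq> M"
  shows "saturation A M = K"
proof
  have Kh: "star_homog D st K" using Ks(1) K by blast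
  have Ksi: "\<forall>K\<in>set Ks. integral_star_ideal D st K" using Ks(1) star_homog_integral by blast
  have AK: "A \<subseteq> K" unfolding A by (rule star_ideal_prod_list_subset_member[OF Ksi K])
  show "saturation A M \<subseteq> K"
    unfolding saturation_def using star_homog_cancel[OF Kh M] AK by blast
  let ?R = "remove1 K Ks"
  have R: "set ?R = set Js - {K}" if "Js = Ks" for Js using set_remove1_eq[OF Ks(2)] that by simp
  have Ri: "\<forall>K\<in>set ?R. integral_star_ideal D st K" using Ksi R by simp
  \<comment> \<open>the cofactor of K is not contained in M, as the other factors are comaximal with K\<close>
  have "\<not> ideal_prod_list D ?R \<subseteq> M"
  proof
    assume "ideal_prod_list D ?R \<subseteq> M"
    then obtain L where L: "L \<in> set ?R" "L \<subseteq> M"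
      using ideal_prod_list_subset_maximal_star_ideal[OF M(1) Ri] by blast
    have "L \<in> set Ks" "L \<noteq> K" using L(1) R by simp_all
    then have "star_comaximal D st K L" using Ks(3) K unfolding pairwise_def by blast
    moreover have "integral_star_ideal D st L" using Ri L(1) by blast
    ultimately show False
      using star_homog_star_comaximal_iff[OF Kh M] L(2) by blast
  qed
  then obtain s where s: "s \<in> ideal_prod_list D ?R" "s \<notin> M" by blast
  have sD: "s \<in> D" using s(1) ideal_prod_list_subset_D[OF Ri] by blast
  have Pf: "frac_ideal D (ideal_prod_list D Ks)"
    using Ks(1) by (simp add: star_homog_frac frac_ideal_ideal_prod_list)
  show "K \<subseteq> saturation A M"
  proof
    fix x assume x: "x \<in> K"
    have "x * s \<in> ideal_prod_list D Ks" unfolding ideal_prod_list_remove1[OF K] using x s(1)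
      by (rule mult_mem_ideal_prod)
    then have "s * x \<in> A" unfolding A using star_extensive[OF Pf] by (auto simp: mult.commute)
    moreover have "x \<in> D" using x integral_star_ideal_subset[OF star_homog_integral[OF Kh]] by blast
    ultimately show "x \<in> saturation A M" unfolding saturation_def using sD s(2) by blast
  qed
qed

lemma star_comaximal_factorization_set_eq:
  assumes Ks: "\<forall>K\<in>set Ks. star_homog D st K" "distinct Ks" "pairwise (star_comaximal D st) (set Ks)"
    and A: "A = st (ideal_prod_list D Ks)"
  shows "set Ks = {saturation A M | M. maximal_star_ideal M \<and> A \<subseteq> M}"
proof
  have Ksi: "\<forall>K\<in>set Ks. integral_star_ideal D st K" using Ks(1) star_homog_integral by blast
  show "set Ks \<subseteq> {saturation A M | M. maximal_star_ideal M \<and> A \<subseteq> M}"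
  proof
    fix K assume K: "K \<in> set Ks"
    have Kh: "star_homog D st K" using Ks(1) K by blast
    obtain M where M: "maximal_star_ideal M" "K \<subseteq> M"
      using exists_maximal_star_ideal[OF star_homog_integral[OF Kh] star_homog_ne_D[OF Kh]] by blast
    have "A \<subseteq> M" unfolding A using star_ideal_prod_list_subset_member[OF Ksi K] M(2) by (rule order_trans)
    then show "K \<in> {saturation A M | M. maximal_star_ideal M \<and> A \<subseteq> M}"
      using star_comaximal_factorization_saturation[OF Ks A K M] M(1) by blast
  qed
  show "{saturation A M | M. maximal_star_ideal M \<and> A \<subseteq> M} \<subseteq> set Ks"
  proof
    fix Z assume "Z \<in> {saturation A M | M. maximal_star_ideal M \<and> A \<subseteq> M}"
    then obtain M where M: "maximal_star_ideal M" "A \<subseteq> M" "Z = saturation A M" by blast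
    have Pf: "frac_ideal D (ideal_prod_list D Ks)"
      using Ks(1) by (simp add: star_homog_frac frac_ideal_ideal_prod_list)
    have "ideal_prod_list D Ks \<subseteq> M" using star_extensive[OF Pf] M(2) unfolding A by (rule order_trans)
    then obtain K where "K \<in> set Ks" "K \<subseteq> M"
      using ideal_prod_list_subset_maximal_star_ideal[OF M(1) Ksi] by blast
    then show "Z \<in> set Ks" using star_comaximal_factorization_saturation[OF Ks A _ M(1)] M(3) by simp
  qed
qed

lemma mutually_star_comaximal_iff:
  assumes "\<forall>K\<in>set Ks. star_homog D st K"
  shows "mutually_star_comaximal D st Ks \<longleftrightarrow> distinct Ks \<and> pairwise (star_comaximal D st) (set Ks)"
proof
  assume mc: "mutually_star_comaximal D st Ks"
  have "distinct Ks" unfolding distinct_conv_nth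
  proof (intro allI impI)
    fix i j assume ij: "i < length Ks" "j < length Ks" "i \<noteq> j"
    then have "star_comaximal D st (Ks ! i) (Ks ! j)" using mc unfolding mutually_star_comaximal_def by blast
    moreover have "star_homog D st (Ks ! i)" using assms ij(1) nth_mem by blast
    ultimately show "Ks ! i \<noteq> Ks ! j" using star_homog_not_star_comaximal_self by metis
  qed
  moreover have "pairwise (star_comaximal D st) (set Ks)" unfolding pairwise_def
  proof (intro ballI impI)
    fix J K assume "J \<in> set Ks" "K \<in> set Ks" "J \<noteq> K"
    then obtain i j where "i < length Ks" "j < length Ks" "Ks ! i = J" "Ks ! j = K" "i \<noteq> j"
      by (metis in_set_conv_nth)
    then show "star_comaximal D st J K" using mc unfolding mutually_star_comaximal_def by blast
  qed
  ultimately show "distinct Ks \<and> pairwise (star_comaximal D st) (set Ks)" ..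
next
  assume "distinct Ks \<and> pairwise (star_comaximal D st) (set Ks)"
  then show "mutually_star_comaximal D st Ks"
    unfolding mutually_star_comaximal_def pairwise_def by (metis nth_eq_iff_index_eq nth_mem)
qed

end

theorem propositionK:
  fixes D :: "'k::field set" and st :: "'k set \<Rightarrow> 'k set"
    and A :: "'k set" and Is :: "'k set list"
  assumes "quotient_domain D"
    and "star_operation D st"
    and "finite_character D st"
    and "\<forall>I\<in>set Is. star_homog D st I"
    and "A = st (ideal_prod_list D Is)"
  shows "\<exists>Js. (\<forall>J\<in>set Js. star_homog D st J) \<and> mutually_star_comaximal D st Js \<and>
             A = st (ideal_prod_list D Js) \<and>
             (\<forall>Ks. (\<forall>K\<in>set Ks. star_homog D st K) \<and> mutually_star_comaximal D st Ks \<and>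
                   A = st (ideal_prod_list D Ks) \<longrightarrow> mset Ks = mset Js)"
proof -
  interpret star_domain D st using assms(1-3) by unfold_locales
  obtain Js where Js: "\<forall>J\<in>set Js. star_homog D st J" "distinct Js" "pairwise (star_comaximal D st) (set Js)"
    and AJ: "A = st (ideal_prod_list D Js)"
    using exists_star_comaximal_factorization[OF assms(4)] assms(5) by auto
  have "mset Ks = mset Js"
    if Ks: "\<forall>K\<in>set Ks. star_homog D st K" "mutually_star_comaximal D st Ks" "A = st (ideal_prod_list D Ks)"
    for Ks
  proof -
    have Ks': "distinct Ks" "pairwise (star_comaximal D st) (set Ks)"
      using Ks(2) mutually_star_comaximal_iff[OF Ks(1)] by simp_all
    have "set Ks = set Js"
      using star_comaximal_factorization_set_eq[OF Ks(1) Ks' Ks(3)] star_comaximal_factorization_set_eq[OF Js AJ]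
      by simp
    then show ?thesis using Ks'(1) Js(2) by (simp add: set_eq_iff_mset_eq_distinct)
  qed
  then show ?thesis using Js AJ mutually_star_comaximal_iff[OF Js(1)] by blast
qed

end
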